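(* Let $g_1,\dots,g_k$ be fully supported elements of $\mathrm{Diff}^2_+(S^1)$, each of which has a fixed point, and let $G$ be the group they generate. If the commutativity graph of $\{g_1,\dots,g_k\}$ is connected, then $G$ is abelian.
   Context: $\mathrm{Diff}^2_+(S^1)$ is the group of orientation-preserving $C^2$ diffeomorphisms of $S^1$. A homeomorphism $f$ is fully supported if the interior of its fixed point set is empty. The commutativity graph of a set $S$ of group elements has one vertex for each $s\in S$ and an edge joining two elements exactly when they commute. *)

theory Defs
  imports "HOL-Analysis.Analysis" "HOL-Algebra.Bij" "HOL-Algebra.Generated_Groups"
begin

definition S1 :: "complex set" where
  "S1 = sphere 0 1"

definition diff2_plus :: "(complex \<Rightarrow> complex) \<Rightarrow> bool" where
  "diff2_plus f \<longleftrightarrow>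
     (\<exists>F F' F'' :: real \<Rightarrow> real.
        (\<forall>t. f (cis (2 * pi * t)) = cis (2 * pi * F t)) \<and>
        (\<forall>t. F (t + 1) = F t + 1) \<and>
        (\<forall>t. (F has_real_derivative F' t) (at t)) \<and>
        (\<forall>t. (F' has_real_derivative F'' t) (at t)) \<and>
        continuous_on UNIV F'' \<and>
        (\<forall>t. F' t > 0))"

definition fix_set :: "(complex \<Rightarrow> complex) \<Rightarrow> complex set" where
  "fix_set f = {z \<in> S1. f z = z}"

definition fully_supported :: "(complex \<Rightarrow> complex) \<Rightarrow> bool" where
  "fully_supported f \<longleftrightarrow> (top_of_set S1) interior_of (fix_set f) = {}"

definition commute_on_S1 :: "(complex \<Rightarrow> complex) \<Rightarrow> (complex \<Rightarrow> complex) \<Rightarrow> bool" where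
  "commute_on_S1 f g \<longleftrightarrow> (\<forall>z \<in> S1. f (g z) = g (f z))"

definition comm_graph_connected :: "(complex \<Rightarrow> complex) set \<Rightarrow> bool" where
  "comm_graph_connected S \<longleftrightarrow>
     (\<forall>a \<in> S. \<forall>b \<in> S.
        (a, b) \<in> ({(x, y). x \<in> S \<and> y \<in> S \<and> commute_on_S1 x y})\<^sup>*)"

end

theory Submission
  imports Defs
begin

text \<open>Each generator lifts to a C^2 map G of the real line with G (t + 1) = G t + 1 and a
  fixed point; the lifts of commuting generators commute, because the commutator of two lifts is
  a continuous integer-valued function that vanishes somewhere.

  Kopell's lemma says: if a C^2 map f without fixed points in (a, b) commutes with a C^1 map W
  fixing a point of (a, b), then W is the identity on (a, b). As fixed point sets have empty
  interior, commuting lifts therefore have the same fixed points, and the C^1 centraliser of a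
  lift G acts freely on every component (a, b) of the complement of Fix G, so it is abelian by
  Hoelder's theorem. Consequently two lifts commuting with a third commute with each other: on
  Fix G trivially, on each component by Hoelder. Induction along paths in the commutativity
  graph makes all lifts, hence all generators, commute.\<close>

section \<open>Orientation-preserving C^1 and C^2 maps of the line\<close>

definition C1_plus :: "(real \<Rightarrow> real) \<Rightarrow> bool" where
  "C1_plus W \<longleftrightarrow> (\<exists>W'. (\<forall>t. (W has_real_derivative W' t) (at t)) \<and>
      continuous_on UNIV W' \<and> (\<forall>t. W' t > 0))"

definition C2_plus :: "(real \<Rightarrow> real) \<Rightarrow> bool" where
  "C2_plus f \<longleftrightarrow> (\<exists>f' f''. (\<forall>t. (f has_real_derivative f' t) (at t)) \<and>
      (\<forall>t. (f' has_real_derivative f'' t) (at t)) \<and> continuous_on UNIV f'' \<and> (\<forall>t. f' t > 0))"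

lemma DERIV_pos_imp_strict_mono:
  fixes f f' :: "real \<Rightarrow> real"
  assumes "\<And>t. (f has_real_derivative f' t) (at t)" and "\<And>t. f' t > 0"
  shows "strict_mono f"
  using DERIV_pos_imp_increasing assms by (intro strict_monoI) blast

lemma C2_plus_imp_C1_plus: "C2_plus f \<Longrightarrow> C1_plus f"
  unfolding C2_plus_def C1_plus_def
  by (meson DERIV_isCont continuous_at_imp_continuous_on)

lemma C1_plus_strict_mono: "C1_plus W \<Longrightarrow> strict_mono W"
  unfolding C1_plus_def using DERIV_pos_imp_strict_mono by blast

lemma C1_plus_isCont: "C1_plus W \<Longrightarrow> isCont W t"
  unfolding C1_plus_def by (meson DERIV_isCont)

lemma C1_plus_id: "C1_plus id"
  unfolding C1_plus_def id_def by (intro exI[of _ "\<lambda>_. 1"]) (auto intro: DERIV_ident)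

lemma C1_plus_comp:
  assumes "C1_plus V" "C1_plus W"
  shows "C1_plus (V \<circ> W)"
proof -
  obtain V' where V: "\<And>t. (V has_real_derivative V' t) (at t)" "continuous_on UNIV V'" "\<And>t. V' t > 0"
    using assms(1) unfolding C1_plus_def by blast
  obtain W' where W: "\<And>t. (W has_real_derivative W' t) (at t)" "continuous_on UNIV W'" "\<And>t. W' t > 0"
    using assms(2) unfolding C1_plus_def by blast
  have "continuous_on UNIV (\<lambda>t. V' (W t) * W' t)"
    using V(2) W(2) C1_plus_isCont[OF assms(2)]
    by (intro continuous_intros continuous_on_compose2[OF V(2)]) (auto simp: continuous_at_imp_continuous_on)
  then show ?thesis
    unfolding C1_plus_def using DERIV_chain[OF V(1) W(1)] V(3) W(3)
    by (intro exI[of _ "\<lambda>t. V' (W t) * W' t"]) auto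
qed

lemma C1_plus_inv:
  assumes "C1_plus W" "bij W"
  shows "C1_plus (inv_into UNIV W)"
proof -
  obtain W' where W: "\<And>t. (W has_real_derivative W' t) (at t)" "continuous_on UNIV W'" "\<And>t. W' t > 0"
    using assms(1) unfolding C1_plus_def by blast
  have inv_W: "inv_into UNIV W (W x) = x" "W (inv_into UNIV W y) = y" for x y
    using assms(2) by (simp_all add: bij_is_inj bij_is_surj surj_f_inv_f)
  have "isCont (inv_into UNIV W) (W x)" for x
    by (rule isCont_inverse_function[of 1]) (auto simp: inv_W C1_plus_isCont[OF assms(1)])
  then have cont: "isCont (inv_into UNIV W) y" for y
    by (metis inv_W(2))
  have "(inv_into UNIV W has_real_derivative inverse (W' (inv_into UNIV W y))) (at y)" for y
    by (rule DERIV_inverse_function[where a="y - 1" and b="y + 1", OF W(1)])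
       (use W(3) cont inv_W in \<open>auto simp: less_imp_neq[symmetric]\<close>)
  moreover have "continuous_on UNIV (\<lambda>y. inverse (W' (inv_into UNIV W y)))"
    using W(2,3) cont by (intro continuous_intros continuous_on_compose2[OF W(2)])
      (auto simp: continuous_at_imp_continuous_on less_imp_neq[symmetric])
  ultimately show ?thesis
    unfolding C1_plus_def using W(3) by (intro exI[of _ "\<lambda>y. inverse (W' (inv_into UNIV W y))"]) auto
qed

lemma DERIV_reflect:
  fixes f :: "real \<Rightarrow> real"
  assumes "(f has_real_derivative D) (at (- t))"
  shows "((\<lambda>t. f (- t)) has_real_derivative - D) (at t)"
  using DERIV_chain2[OF assms DERIV_minus[OF DERIV_ident]] by simp

lemma C1_plus_reflect: "C1_plus W \<Longrightarrow> C1_plus (\<lambda>t. - W (- t))"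
proof -
  assume "C1_plus W"
  then obtain W' where W: "\<And>t. (W has_real_derivative W' t) (at t)"
    "continuous_on UNIV W'" "\<And>t. W' t > 0"
    unfolding C1_plus_def by blast
  have "continuous_on UNIV (\<lambda>t. W' (- t))"
    by (intro continuous_intros continuous_on_compose2[OF W(2)]) auto
  then show ?thesis
    unfolding C1_plus_def using DERIV_reflect[THEN DERIV_minus, OF W(1)] W(3)
    by (intro exI[of _ "\<lambda>t. W' (- t)"]) auto
qed

lemma C2_plus_reflect: "C2_plus f \<Longrightarrow> C2_plus (\<lambda>t. - f (- t))"
proof -
  assume "C2_plus f"
  then obtain f' f'' where f: "\<And>t. (f has_real_derivative f' t) (at t)"
    "\<And>t. (f' has_real_derivative f'' t) (at t)" "continuous_on UNIV f''" "\<And>t. f' t > 0"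
    unfolding C2_plus_def by blast
  have "continuous_on UNIV (\<lambda>t. - f'' (- t))"
    by (intro continuous_intros continuous_on_compose2[OF f(3)]) auto
  then show ?thesis
    unfolding C2_plus_def using DERIV_reflect[THEN DERIV_minus, OF f(1)] DERIV_reflect[OF f(2)] f(4)
    by (intro exI[of _ "\<lambda>t. f' (- t)"] exI[of _ "\<lambda>t. - f'' (- t)"]) auto
qed

lemma DERIV_funpow:
  fixes W W' :: "real \<Rightarrow> real"
  assumes "\<And>t. (W has_real_derivative W' t) (at t)"
  shows "((W ^^ m) has_real_derivative (\<Prod>k<m. W' ((W ^^ k) x))) (at x)"
proof (induction m)
  case 0
  show ?case by (simp add: DERIV_ident[unfolded id_def[symmetric]])
next
  case (Suc m)
  show ?case using DERIV_chain[OF assms Suc] by (simp add: mult.commute o_def)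
qed

lemma isCont_funpow:
  fixes W :: "real \<Rightarrow> real"
  assumes "\<And>t. isCont W t"
  shows "isCont (W ^^ n) x"
proof (induction n arbitrary: x)
  case (Suc n)
  show ?case using isCont_o2[OF Suc assms] by (simp add: o_def)
qed simp

lemma funpow_commute:
  assumes "\<And>t. f (W t) = W (f t)"
  shows "(f ^^ n) ((W ^^ m) x) = (W ^^ m) ((f ^^ n) x)"
proof -
  have "f ((W ^^ m) x) = (W ^^ m) (f x)" for x
    by (induction m) (simp_all add: assms)
  then show ?thesis by (induction n) simp_all
qed

lemma strict_mono_funpow:
  fixes f :: "real \<Rightarrow> real"
  assumes "strict_mono f"
  shows "strict_mono (f ^^ n)"
proof (induction n)
  case (Suc n)
  then show ?case using assms by (simp add: strict_mono_def)
qed (simp add: strict_mono_def)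

lemma funpow_fixed_point: "W x = x \<Longrightarrow> (W ^^ n) x = x"
  by (induction n) simp_all

section \<open>Kopell's lemma\<close>

lemma orbit_limit_fixed_point:
  fixes f :: "real \<Rightarrow> real"
  assumes "\<And>t. isCont f t" and "(\<lambda>n. (f ^^ n) u) \<longlonglongrightarrow> L"
  shows "f L = L"
proof -
  have "(\<lambda>n. f ((f ^^ n) u)) \<longlonglongrightarrow> f L"
    using assms isCont_tendsto_compose by blast
  moreover have "(\<lambda>n. f ((f ^^ n) u)) \<longlonglongrightarrow> L"
    using LIMSEQ_Suc[OF assms(2)] by simp
  ultimately show ?thesis using LIMSEQ_unique by blast
qed

lemma decreasing_orbit_bounds:
  fixes f :: "real \<Rightarrow> real"
  assumes "strict_mono f" "f a = a" and below: "\<And>x. a < x \<Longrightarrow> x \<le> x0 \<Longrightarrow> f x < x"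
    and "a < u" "u \<le> x0"
  shows "a < (f ^^ n) u \<and> (f ^^ n) u \<le> u"
proof (induction n)
  case (Suc n)
  have "f a < f ((f ^^ n) u)" using Suc assms(1) by (simp add: strict_mono_def)
  moreover have "f ((f ^^ n) u) < (f ^^ n) u" using Suc assms(5) below by auto
  ultimately show ?case using Suc assms(2) by simp
qed (use assms in simp)

lemma decreasing_orbit_tendsto:
  fixes f :: "real \<Rightarrow> real"
  assumes "strict_mono f" "\<And>t. isCont f t" "f a = a"
    and below: "\<And>x. a < x \<Longrightarrow> x \<le> x0 \<Longrightarrow> f x < x" and "a < u" "u \<le> x0"
  shows "(\<lambda>n. (f ^^ n) u) \<longlonglongrightarrow> a"
proof -
  note bounds = decreasing_orbit_bounds[OF assms(1,3) below assms(5,6)]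
  have "decseq (\<lambda>n. (f ^^ n) u)"
  proof (rule decseq_SucI)
    show "(f ^^ Suc n) u \<le> (f ^^ n) u" for n
      using bounds[of n] below[of "(f ^^ n) u"] assms(6) by simp
  qed
  then obtain L where L: "(\<lambda>n. (f ^^ n) u) \<longlonglongrightarrow> L"
    using bounds decseq_convergent[of _ a] by (meson less_imp_le)
  have "a \<le> L"
    by (rule LIMSEQ_le_const[OF L]) (use bounds less_imp_le in blast)
  moreover have "L \<le> x0"
    by (rule LIMSEQ_le_const2[OF L]) (meson bounds assms(6) order_trans)
  moreover have "f L = L" using orbit_limit_fixed_point[OF assms(2) L] .
  ultimately have "L = a" using below by force
  then show ?thesis using L by simp
qed

lemma funpow_reflect: "((\<lambda>t. - g (- t)) ^^ n) x = - (g ^^ n) (- x)"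
  for g :: "real \<Rightarrow> real"
  by (induction n) simp_all

lemma increasing_orbit:
  fixes g :: "real \<Rightarrow> real"
  assumes "strict_mono g" "\<And>t. isCont g t" "g b = b"
    and above: "\<And>x. x0 \<le> x \<Longrightarrow> x < b \<Longrightarrow> x < g x" and "x0 \<le> u" "u < b"
  shows "(\<lambda>n. (g ^^ n) u) \<longlonglongrightarrow> b" and "u \<le> (g ^^ n) u \<and> (g ^^ n) u < b"
proof -
  let ?h = "\<lambda>t. - g (- t)"
  have h_mono: "strict_mono ?h" using assms(1) by (simp add: strict_mono_def)
  have h_cont: "isCont ?h t" for t
    by (intro continuous_intros isCont_o2[OF _ assms(2)])
  have h_fixed: "?h (- b) = - b" using assms(3) by simp
  have h_below: "?h x < x" if "- b < x" "x \<le> - x0" for x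
    using above[of "- x"] that by simp
  note h = h_mono h_cont h_fixed h_below
  show "(\<lambda>n. (g ^^ n) u) \<longlonglongrightarrow> b"
    using tendsto_minus[OF decreasing_orbit_tendsto[OF h, where u="- u"]] assms(5,6)
    by (simp add: funpow_reflect)
  show "u \<le> (g ^^ n) u \<and> (g ^^ n) u < b"
    using decreasing_orbit_bounds[OF h(1,3,4), where u="- u" and n=n] assms(5,6)
    by (simp add: funpow_reflect)
qed

lemma ln_deriv_lipschitz:
  fixes f' f'' :: "real \<Rightarrow> real"
  assumes "\<And>t. (f' has_real_derivative f'' t) (at t)" "continuous_on UNIV f''" "\<And>t. f' t > 0"
  obtains B where "B-lipschitz_on {a..b} (\<lambda>t. ln (f' t))"
proof -
  have "continuous_on {a..b} (\<lambda>t. f'' t / f' t)"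
    using assms by (intro continuous_intros continuous_on_subset[OF assms(2)])
      (auto simp: less_imp_neq[symmetric] intro: continuous_at_imp_continuous_on DERIV_isCont)
  then obtain B where "B \<ge> 0" and B: "\<And>x. x \<in> {a..b} \<Longrightarrow> norm (f'' x / f' x) \<le> B"
    using continuous_on_compact_bound[OF compact_Icc] by blast
  have deriv: "((\<lambda>t. ln (f' t)) has_real_derivative f'' x / f' x) (at x)" for x
    using DERIV_chain'[OF assms(1) DERIV_ln_divide[OF assms(3)]] by (simp add: field_simps)
  have has_deriv: "((\<lambda>t. ln (f' t)) has_derivative (*) (f'' x / f' x)) (at x within {a..b})" for x
    by (rule has_derivative_at_withinI[OF has_field_derivative_imp_has_derivative[OF deriv]])
  have "onorm ((*) c) = \<bar>c\<bar>" for c :: real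
  proof -
    have "(*\<^sub>R) c = (*) c" by (rule ext) simp
    then show ?thesis using onorm_scaleR[where f="\<lambda>x::real. x", OF bounded_linear_ident, of c] by (simp add: onorm_id)
  qed
  then have onorm_le: "onorm ((*) (f'' x / f' x)) \<le> B" if "x \<in> {a..b}" for x
    using B[OF that] by simp
  have "B-lipschitz_on {a..b} (\<lambda>t. ln (f' t))"
    by (rule bounded_derivative_imp_lipschitz[OF has_deriv convex_real_interval(5) onorm_le])
      (use \<open>B \<ge> 0\<close> in auto)
  then show thesis ..
qed

lemma DERIV_eq_1_at_limit_of_fixed_points:
  fixes W :: "real \<Rightarrow> real"
  assumes "(W has_real_derivative D) (at a)" "W a = a"
    and "s \<longlonglongrightarrow> a" "\<And>n. s n \<noteq> a" "\<And>n. W (s n) = s n"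
  shows "D = 1"
proof -
  have "filterlim (\<lambda>n. s n - a) (at 0) sequentially"
    using assms(3,4) by (intro filterlim_atI) (auto simp: LIM_zero)
  from filterlim_compose[OF assms(1)[unfolded DERIV_def] this]
  have "(\<lambda>n. (W (s n) - W a) / (s n - a)) \<longlonglongrightarrow> D"
    by (simp add: o_def)
  moreover have "(\<lambda>n. (W (s n) - W a) / (s n - a)) = (\<lambda>n. 1)"
    using assms(2,4,5) by (auto simp: fun_eq_iff)
  ultimately show "D = 1" using LIMSEQ_unique tendsto_const by metis
qed

lemma uniform_increments_unbounded:
  fixes x :: "nat \<Rightarrow> real"
  assumes "\<And>m. x m + \<delta> \<le> x (Suc m)" "\<delta> > 0"
  obtains m where "x m > B"
proof -
  have linear: "x 0 + real m * \<delta> \<le> x m" for m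
  proof (induction m)
    case (Suc m)
    then show ?case using assms(1)[of m] by (simp add: algebra_simps)
  qed simp
  obtain m where "B - x 0 < real m * \<delta>"
    using ex_less_of_nat_mult[OF assms(2)] by blast
  then have "B < x m" using linear[of m] by linarith
  then show thesis by (rule that)
qed

lemma no_fixed_point_sign:
  fixes V :: "real \<Rightarrow> real"
  assumes cont: "\<And>t. isCont V t" and no_fixed: "\<And>x. a < x \<Longrightarrow> x < b \<Longrightarrow> V x \<noteq> x"
  obtains "\<And>x. a < x \<Longrightarrow> x < b \<Longrightarrow> V x < x" | "\<And>x. a < x \<Longrightarrow> x < b \<Longrightarrow> x < V x"
proof -
  have "(\<forall>x. a < x \<and> x < b \<longrightarrow> V x < x) \<or> (\<forall>x. a < x \<and> x < b \<longrightarrow> x < V x)"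
  proof (rule ccontr)
    assume "\<not> ?thesis"
    then obtain x1 x2 where x1: "a < x1" "x1 < b" "x1 \<le> V x1" and x2: "a < x2" "x2 < b" "V x2 \<le> x2"
      by (auto simp: not_less)
    have "continuous_on {min x1 x2..max x1 x2} (\<lambda>x. V x - x)"
      using cont by (intro continuous_intros) (simp add: continuous_at_imp_continuous_on)
    then have "\<exists>z. min x1 x2 \<le> z \<and> z \<le> max x1 x2 \<and> V z - z = 0"
      using IVT'[of "\<lambda>x. V x - x" x2 0 x1] IVT2'[of "\<lambda>x. V x - x" x2 0 x1] x1(3) x2(3)
      by (cases "x1 \<le> x2") (auto simp: min_def max_def)
    then show False using no_fixed x1 x2 by force
  qed
  then show thesis using that by blast
qed

text \<open>In this setting [f x0, x0] is a fundamental domain of f on (a, x0].\<close>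

locale kopell_setup =
  fixes f f' f'' W W' :: "real \<Rightarrow> real" and a x0 :: real
  assumes f_deriv: "\<And>t. (f has_real_derivative f' t) (at t)"
    and f'_deriv: "\<And>t. (f' has_real_derivative f'' t) (at t)"
    and f''_cont: "continuous_on UNIV f''"
    and f'_pos: "\<And>t. f' t > 0"
    and W_deriv: "\<And>t. (W has_real_derivative W' t) (at t)"
    and W'_cont: "continuous_on UNIV W'"
    and W'_pos: "\<And>t. W' t > 0"
    and commute: "\<And>t. f (W t) = W (f t)"
    and a_less_x0: "a < x0" and f_a: "f a = a"
    and below_diagonal: "\<And>x. a < x \<Longrightarrow> x \<le> x0 \<Longrightarrow> f x < x"
    and W_x0: "W x0 = x0"
begin

definition Df :: "nat \<Rightarrow> real \<Rightarrow> real" where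
  "Df n x = (\<Prod>k<n. f' ((f ^^ k) x))"

definition DW :: "nat \<Rightarrow> real \<Rightarrow> real" where
  "DW m x = (\<Prod>k<m. W' ((W ^^ k) x))"

lemma DERIV_f_funpow: "((f ^^ n) has_real_derivative Df n x) (at x)"
  unfolding Df_def by (rule DERIV_funpow[OF f_deriv])

lemma DERIV_W_funpow: "((W ^^ m) has_real_derivative DW m x) (at x)"
  unfolding DW_def by (rule DERIV_funpow[OF W_deriv])

lemma Df_pos: "Df n x > 0"
  unfolding Df_def using f'_pos by (simp add: prod_pos)

lemma DW_pos: "DW m x > 0"
  unfolding DW_def using W'_pos by (simp add: prod_pos)

lemma isCont_DW: "isCont (DW m) x"
proof -
  have "isCont W' t" for t
    using W'_cont by (simp add: continuous_on_eq_continuous_at)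
  then have "isCont (\<lambda>x. W' ((W ^^ k) x)) x" for k
    by (rule isCont_o2[OF isCont_funpow[OF DERIV_isCont[OF W_deriv]]])
  then show ?thesis
    unfolding DW_def[abs_def] by (intro continuous_intros)
qed

lemma f_strict_mono: "strict_mono f"
  using DERIV_pos_imp_strict_mono[OF f_deriv f'_pos] .

lemma W_strict_mono: "strict_mono W"
  using DERIV_pos_imp_strict_mono[OF W_deriv W'_pos] .

lemma orbit_bounds: "a < u \<Longrightarrow> u \<le> x0 \<Longrightarrow> a < (f ^^ n) u \<and> (f ^^ n) u \<le> u"
  using decreasing_orbit_bounds[OF f_strict_mono f_a below_diagonal] .

lemma orbit_tendsto: "a < u \<Longrightarrow> u \<le> x0 \<Longrightarrow> (\<lambda>n. (f ^^ n) u) \<longlonglongrightarrow> a"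
  using decreasing_orbit_tendsto[OF f_strict_mono DERIV_isCont[OF f_deriv] f_a below_diagonal] .

lemma W_fixes_orbit: "W ((f ^^ n) x0) = (f ^^ n) x0"
  by (induction n) (simp_all add: W_x0 commute[symmetric])

lemma W_a: "W a = a"
proof -
  note orbit = orbit_tendsto[OF a_less_x0 order_refl]
  have "(\<lambda>n. W ((f ^^ n) x0)) \<longlonglongrightarrow> W a"
    using orbit DERIV_isCont[OF W_deriv] isCont_tendsto_compose by blast
  then show ?thesis
    using orbit LIMSEQ_unique by (simp add: W_fixes_orbit)
qed

lemma DW_a: "DW m a = 1"
proof -
  have "W' a = 1"
    using DERIV_eq_1_at_limit_of_fixed_points[OF W_deriv W_a orbit_tendsto[OF a_less_x0 order_refl]
        _ W_fixes_orbit] orbit_bounds[OF a_less_x0 order_refl] by force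
  then show ?thesis unfolding DW_def by (simp add: funpow_fixed_point[of W a, OF W_a])
qed

lemma Df_DW_commute: "DW m ((f ^^ n) x) * Df n x = Df n ((W ^^ m) x) * DW m x"
proof -
  have "(f ^^ n) \<circ> (W ^^ m) = (W ^^ m) \<circ> (f ^^ n)"
    using funpow_commute[of f W, OF commute] by (auto simp: fun_eq_iff)
  then show ?thesis
    using DERIV_chain[OF DERIV_W_funpow DERIV_f_funpow, of m n x]
      DERIV_chain[OF DERIV_f_funpow DERIV_W_funpow, of n m x]
    by (metis DERIV_unique)
qed

lemma funpow_fundamental_domain:
  assumes "u \<in> {f x0..x0}"
  shows "(f ^^ k) u \<in> {(f ^^ Suc k) x0..(f ^^ k) x0}"
  using assms strict_mono_funpow[OF f_strict_mono, of k]
  by (auto simp: strict_mono_less_eq funpow_swap1)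

lemma W_funpow_fundamental_domain:
  assumes "u \<in> {f x0..x0}"
  shows "(W ^^ m) u \<in> {f x0..x0}"
proof -
  have "(W ^^ m) (f x0) = f x0" "(W ^^ m) x0 = x0"
    using W_fixes_orbit[of 1] W_x0 by (simp_all add: funpow_fixed_point)
  then show ?thesis
    using assms strict_mono_funpow[OF W_strict_mono, of m] by (metis atLeastAtMost_iff strict_mono_less_eq)
qed

lemma fundamental_domain_above_a: "u \<in> {f x0..x0} \<Longrightarrow> a < u"
  using orbit_bounds[OF a_less_x0 order_refl, of 1] by simp

text \<open>The intervals f^k [f x0, x0] = [f^(k+1) x0, f^k x0] do not overlap and lie in [a, x0],
  so the Lipschitz bounds for ln f' along two orbits add up telescopically.\<close>

lemma log_distortion:
  assumes B: "B-lipschitz_on {a..x0} (\<lambda>t. ln (f' t))" and uv: "u \<in> {f x0..x0}" "v \<in> {f x0..x0}"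
  shows "ln (Df n v) - ln (Df n u) \<le> B * (x0 - a)"
proof -
  let ?s = "\<lambda>k. (f ^^ k) x0"
  have s_bounds: "a < ?s k" "?s k \<le> x0" for k
    using orbit_bounds[OF a_less_x0 order_refl, of k] by auto
  have step: "ln (f' ((f ^^ k) v)) - ln (f' ((f ^^ k) u)) \<le> B * (?s k - ?s (Suc k))" for k
  proof -
    have k_uv: "(f ^^ k) u \<in> {?s (Suc k)..?s k}" "(f ^^ k) v \<in> {?s (Suc k)..?s k}"
      using funpow_fundamental_domain uv by blast+
    then have "(f ^^ k) u \<in> {a..x0}" "(f ^^ k) v \<in> {a..x0}"
      using s_bounds[of "Suc k"] s_bounds[of k] by auto
    then have "ln (f' ((f ^^ k) v)) - ln (f' ((f ^^ k) u)) \<le> B * dist ((f ^^ k) v) ((f ^^ k) u)"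
      using lipschitz_onD[OF B] by (fastforce simp: dist_real_def)
    also have "\<dots> \<le> B * (?s k - ?s (Suc k))"
      using lipschitz_on_nonneg[OF B] k_uv by (intro mult_left_mono) (auto simp: dist_real_def)
    finally show ?thesis .
  qed
  have "ln (Df n v) - ln (Df n u) = (\<Sum>k<n. ln (f' ((f ^^ k) v)) - ln (f' ((f ^^ k) u)))"
    unfolding Df_def using f'_pos by (simp add: ln_prod sum_subtractf less_imp_neq[symmetric])
  also have "\<dots> \<le> (\<Sum>k<n. B * (?s k - ?s (Suc k)))"
    using step by (rule sum_mono)
  also have "\<dots> = B * (\<Sum>k<n. ?s k - ?s (Suc k))"
    by (rule sum_distrib_left[symmetric])
  also have "\<dots> = B * (x0 - ?s n)"
    by (subst sum_lessThan_telescope') simp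
  also have "\<dots> \<le> B * (x0 - a)"
    using lipschitz_on_nonneg[OF B] s_bounds[of n] by (intro mult_left_mono) auto
  finally show ?thesis .
qed

lemma bounded_distortion:
  obtains c where "c > 0" and "\<And>n u v. u \<in> {f x0..x0} \<Longrightarrow> v \<in> {f x0..x0} \<Longrightarrow> c * Df n v \<le> Df n u"
proof -
  obtain B where B: "B-lipschitz_on {a..x0} (\<lambda>t. ln (f' t))"
    using ln_deriv_lipschitz[OF f'_deriv f''_cont f'_pos] .
  have "exp (- B * (x0 - a)) * Df n v \<le> Df n u"
    if "u \<in> {f x0..x0}" "v \<in> {f x0..x0}" for n u v
  proof -
    have "exp (- B * (x0 - a)) * Df n v = exp (ln (Df n v) - B * (x0 - a))"
      using Df_pos[of n v] by (simp add: exp_diff exp_minus divide_inverse mult.commute)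
    also have "\<dots> \<le> exp (ln (Df n u))"
      using log_distortion[OF B that, of n] by simp
    also have "\<dots> = Df n u"
      using Df_pos[of n u] by simp
    finally show ?thesis .
  qed
  with exp_gt_zero show thesis by (rule that)
qed


text \<open>Differentiating W^m (f^n x) = f^n (W^m x) and bounding the distortion of f^n gives
  c * DW m (f^n x) <= DW m x; now let n tend to infinity, using DW m a = 1.\<close>

lemma DW_lower_bound:
  obtains c where "c > 0" and "\<And>m \<xi>. \<xi> \<in> {f x0..x0} \<Longrightarrow> c \<le> DW m \<xi>"
proof -
  obtain c where c: "c > 0" "\<And>n u v. u \<in> {f x0..x0} \<Longrightarrow> v \<in> {f x0..x0} \<Longrightarrow> c * Df n v \<le> Df n u"
    using bounded_distortion by blast
  have "c \<le> DW m \<xi>" if \<xi>: "\<xi> \<in> {f x0..x0}" for m \<xi>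
  proof -
    have "c * DW m ((f ^^ n) \<xi>) \<le> DW m \<xi>" for n
    proof -
      have "Df n \<xi> * (c * DW m ((f ^^ n) \<xi>)) = (c * Df n ((W ^^ m) \<xi>)) * DW m \<xi>"
        using Df_DW_commute[of m n \<xi>] by (simp add: algebra_simps)
      also have "\<dots> \<le> Df n \<xi> * DW m \<xi>"
        using c(2)[OF \<xi> W_funpow_fundamental_domain[OF \<xi>]] DW_pos[of m \<xi>]
        by (simp add: mult_right_mono)
      finally show ?thesis using Df_pos[of n \<xi>] by simp
    qed
    moreover have "(\<lambda>n. c * DW m ((f ^^ n) \<xi>)) \<longlonglongrightarrow> c * DW m a"
      using orbit_tendsto[OF fundamental_domain_above_a[OF \<xi>]] \<xi> isCont_DW
      by (intro tendsto_mult_left isCont_tendsto_compose[of _ "DW m"]) auto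
    ultimately have "c * DW m a \<le> DW m \<xi>"
      by (intro LIMSEQ_le_const2) auto
    then show ?thesis by (simp add: DW_a)
  qed
  with c(1) show thesis by (rule that)
qed

lemma W_funpow_expanding:
  obtains c where "c > 0"
    and "\<And>m u v. u \<in> {f x0..x0} \<Longrightarrow> v \<in> {f x0..x0} \<Longrightarrow> u \<le> v \<Longrightarrow>
           c * (v - u) \<le> (W ^^ m) v - (W ^^ m) u"
proof -
  obtain c where c: "c > 0" "\<And>m \<xi>. \<xi> \<in> {f x0..x0} \<Longrightarrow> c \<le> DW m \<xi>"
    using DW_lower_bound by blast
  have "c * (v - u) \<le> (W ^^ m) v - (W ^^ m) u"
    if uv: "u \<in> {f x0..x0}" "v \<in> {f x0..x0}" "u \<le> v" for m u v
  proof -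
    have "(W ^^ m) u - c * u \<le> (W ^^ m) v - c * v"
    proof (rule DERIV_nonneg_imp_nondecreasing[OF \<open>u \<le> v\<close>])
      fix t assume "u \<le> t" "t \<le> v"
      then have "c \<le> DW m t" using c(2) uv by auto
      then show "\<exists>y. ((\<lambda>t. (W ^^ m) t - c * t) has_real_derivative y) (at t) \<and> y \<ge> 0"
        using DERIV_W_funpow[of m t]
        by (intro exI[of _ "DW m t - c"]) (auto intro!: derivative_eq_intros)
    qed
    then show ?thesis by (simp add: algebra_simps)
  qed
  with c(1) show thesis by (rule that)
qed

lemma W_fixes_fundamental_domain:
  assumes y: "y \<in> {f x0..x0}"
  shows "W y = y"
proof (rule ccontr)
  assume "W y \<noteq> y"
  obtain c where c: "c > 0"
    "\<And>m u v. u \<in> {f x0..x0} \<Longrightarrow> v \<in> {f x0..x0} \<Longrightarrow> u \<le> v \<Longrightarrow>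
       c * (v - u) \<le> (W ^^ m) v - (W ^^ m) u"
    using W_funpow_expanding by blast
  have Wy: "W y \<in> {f x0..x0}" using W_funpow_fundamental_domain[OF y, of 1] by simp
  have orbit: "(W ^^ m) y \<in> {f x0..x0}" for m using W_funpow_fundamental_domain[OF y] .
  have shift: "(W ^^ Suc m) y = (W ^^ m) (W y)" for m by (simp add: funpow_swap1)
  consider "y < W y" | "W y < y" using \<open>W y \<noteq> y\<close> by linarith
  then show False
  proof cases
    case 1
    have incr: "(W ^^ m) y + c * (W y - y) \<le> (W ^^ Suc m) y" for m
      using c(2)[OF y Wy, of m] 1 shift by simp
    have "c * (W y - y) > 0" using 1 c(1) by simp
    then obtain m where "(W ^^ m) y > x0"
      by (rule uniform_increments_unbounded[of "\<lambda>m. (W ^^ m) y", OF incr])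
    then show False using orbit[of m] by simp
  next
    case 2
    have incr: "- (W ^^ m) y + c * (y - W y) \<le> - (W ^^ Suc m) y" for m
      using c(2)[OF Wy y, of m] 2 shift by simp
    have "c * (y - W y) > 0" using 2 c(1) by simp
    then obtain m where "- (W ^^ m) y > - f x0"
      by (rule uniform_increments_unbounded[of "\<lambda>m. - (W ^^ m) y", OF incr])
    then show False using orbit[of m] by simp
  qed
qed

lemma W_fixes_below:
  assumes "a < y" "y \<le> x0"
  shows "W y = y"
proof -
  have "\<forall>\<^sub>F n in sequentially. (f ^^ n) x0 < y"
    using order_tendstoD(2)[OF orbit_tendsto[OF a_less_x0 order_refl] \<open>a < y\<close>] .
  then obtain n where "(f ^^ n) x0 < y"
    by (meson eventually_sequentially order_refl)
  moreover have "\<not> (f ^^ 0) x0 < y" using assms(2) by simp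
  ultimately obtain k where k: "\<not> (f ^^ k) x0 < y" "(f ^^ Suc k) x0 < y"
    using ex_least_nat_less[of "\<lambda>n. (f ^^ n) x0 < y"] by blast
  let ?z = "(f ^^ k) x0"
  have z: "a < ?z" "?z \<le> x0"
    using orbit_bounds[OF a_less_x0 order_refl] by auto
  interpret z: kopell_setup f f' f'' W W' a ?z
    using f_deriv f'_deriv f''_cont f'_pos W_deriv W'_cont W'_pos commute f_a W_fixes_orbit
      below_diagonal z
    by unfold_locales auto
  show ?thesis using z.W_fixes_fundamental_domain k by simp
qed

end

text \<open>The backward f-orbit of z increases to b and is fixed by W, so every y in (a, b) lies
  in a basin (a, z'] with W z' = z'.\<close>

lemma kopell_below_diagonal:
  assumes f: "C2_plus f" "surj f" and W: "C1_plus W" and commute: "\<And>t. f (W t) = W (f t)"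
    and "f a = a" "f b = b" and below: "\<And>x. a < x \<Longrightarrow> x < b \<Longrightarrow> f x < x"
    and z: "a < z" "z < b" "W z = z" and y: "a < y" "y < b"
  shows "W y = y"
proof -
  obtain f' f'' where f': "\<And>t. (f has_real_derivative f' t) (at t)"
    "\<And>t. (f' has_real_derivative f'' t) (at t)" "continuous_on UNIV f''" "\<And>t. f' t > 0"
    using f(1) unfolding C2_plus_def by blast
  obtain W' where W': "\<And>t. (W has_real_derivative W' t) (at t)" "continuous_on UNIV W'" "\<And>t. W' t > 0"
    using W unfolding C1_plus_def by blast
  let ?g = "inv_into UNIV f"
  have f_mono: "strict_mono f" using C1_plus_strict_mono[OF C2_plus_imp_C1_plus[OF f(1)]] .
  have f_g: "f (?g x) = x" for x using f(2) by (simp add: surj_f_inv_f)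
  have f_inj: "f u = f v \<longleftrightarrow> u = v" for u v using strict_mono_eq[OF f_mono] .
  have g: "C1_plus ?g"
    using C1_plus_inv[OF C2_plus_imp_C1_plus[OF f(1)]] f(2) strict_mono_imp_inj_on[OF f_mono]
    by (simp add: bij_def)
  have "?g b = b" using f_inj[of "?g b" b] f_g[of b] \<open>f b = b\<close> by simp
  moreover have "x < ?g x" if "z \<le> x" "x < b" for x
    using below[of x] f_g[of x] strict_mono_less[OF f_mono, of x "?g x"] that z by simp
  ultimately have "(\<lambda>n. (?g ^^ n) z) \<longlonglongrightarrow> b" and g_orbit: "z \<le> (?g ^^ n) z \<and> (?g ^^ n) z < b" for n
    using increasing_orbit[OF C1_plus_strict_mono[OF g] C1_plus_isCont[OF g], of b z z] z by auto
  then obtain n where n: "y < (?g ^^ n) z"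
    using order_tendstoD(1)[of _ b sequentially y] y(2) by (meson eventually_sequentially order_refl)
  have "W (?g t) = ?g (W t)" for t
    using commute[of "?g t"] f_g[of t] f_g[of "W t"] f_inj[of "W (?g t)" "?g (W t)"] by simp
  then have W_fixed: "W ((?g ^^ n) z) = (?g ^^ n) z"
    using funpow_commute[of ?g W n 1 z] z(3) by simp
  interpret kopell_setup f f' f'' W W' a "(?g ^^ n) z"
  proof
    show "a < (?g ^^ n) z" using g_orbit[of n] z(1) by linarith
    show "f x < x" if "a < x" "x \<le> (?g ^^ n) z" for x
      using below that g_orbit[of n] by simp
  qed (use f' W' commute \<open>f a = a\<close> W_fixed in auto)
  show ?thesis using W_fixes_below y n by simp
qed

theorem Kopell:
  assumes f: "C2_plus f" "surj f" and W: "C1_plus W" and commute: "\<And>t. f (W t) = W (f t)"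
    and ab: "f a = a" "f b = b" and no_fixed: "\<And>x. a < x \<Longrightarrow> x < b \<Longrightarrow> f x \<noteq> x"
    and z: "a < z" "z < b" "W z = z" and y: "a < y" "y < b"
  shows "W y = y"
proof -
  consider "\<And>x. a < x \<Longrightarrow> x < b \<Longrightarrow> f x < x" | "\<And>x. a < x \<Longrightarrow> x < b \<Longrightarrow> x < f x"
    using no_fixed_point_sign[OF C1_plus_isCont[OF C2_plus_imp_C1_plus[OF f(1)]] no_fixed] by blast
  then show ?thesis
  proof cases
    case 1
    then show ?thesis using kopell_below_diagonal[OF f W commute ab _ z y] by blast
  next
    case 2 \<comment> \<open>reduced to case 1 by the reflection t \<mapsto> -t\<close>
    have surj_reflect: "surj (\<lambda>t. - f (- t))"
      by (rule surjI[of _ "\<lambda>z. - inv_into UNIV f (- z)"]) (simp add: surj_f_inv_f[OF f(2)])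
    have "- W (- (- y)) = - y"
    proof (rule kopell_below_diagonal[OF C2_plus_reflect[OF f(1)] surj_reflect C1_plus_reflect[OF W],
          where z="- z"])
      show "- f (- x) < x" if "- b < x" "x < - a" for x
        using 2[of "- x"] that by simp
    qed (use commute ab z y in simp_all)
    then show ?thesis by simp
  qed
qed

section \<open>Hoelder's theorem for the centraliser of a gap\<close>

text \<open>By Kopell's lemma an element of Cent with a fixed point in (a, b) is the identity there,
  so comparison on (a, b) totally orders Cent (Cent_trichotomy); Hoelder's argument then shows
  that Cent is abelian on (a, b).\<close>

locale centralizer_on_gap =
  fixes G :: "real \<Rightarrow> real" and a b :: real
  assumes G_C2: "C2_plus G" and G_surj: "surj G" and a_less_b: "a < b"
    and G_a: "G a = a" and G_b: "G b = b"
    and G_no_fixed: "\<And>x. a < x \<Longrightarrow> x < b \<Longrightarrow> G x \<noteq> x"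
begin

definition Cent :: "(real \<Rightarrow> real) set" where
  "Cent = {W. C1_plus W \<and> bij W \<and> (\<forall>t. W (G t) = G (W t)) \<and> W a = a \<and> W b = b}"

definition lt_on :: "(real \<Rightarrow> real) \<Rightarrow> (real \<Rightarrow> real) \<Rightarrow> bool" where
  "lt_on V W \<longleftrightarrow> (\<forall>x. a < x \<and> x < b \<longrightarrow> V x < W x)"

definition le_on :: "(real \<Rightarrow> real) \<Rightarrow> (real \<Rightarrow> real) \<Rightarrow> bool" where
  "le_on V W \<longleftrightarrow> (\<forall>x. a < x \<and> x < b \<longrightarrow> V x \<le> W x)"

definition eq_on :: "(real \<Rightarrow> real) \<Rightarrow> (real \<Rightarrow> real) \<Rightarrow> bool" where
  "eq_on V W \<longleftrightarrow> (\<forall>x. a < x \<and> x < b \<longrightarrow> V x = W x)"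

abbreviation finv :: "(real \<Rightarrow> real) \<Rightarrow> real \<Rightarrow> real" where \<comment> \<open>inv is the group inverse of HOL-Algebra\<close>
  "finv W \<equiv> inv_into UNIV W"

lemma CentD:
  assumes "W \<in> Cent"
  shows "C1_plus W" "bij W" "\<And>t. W (G t) = G (W t)" "W a = a" "W b = b" "strict_mono W"
    "\<And>t. isCont W t"
  using assms C1_plus_strict_mono C1_plus_isCont unfolding Cent_def by auto

lemma Cent_finv_simps [simp]:
  assumes "W \<in> Cent"
  shows "W (finv W y) = y" "finv W (W x) = x"
  using CentD(2)[OF assms] by (auto simp: bij_def surj_f_inv_f)

lemma Cent_maps_gap:
  assumes "W \<in> Cent" "a < x" "x < b"
  shows "a < W x" "W x < b"
  using strict_mono_less[OF CentD(6)[OF assms(1)]] CentD(4,5)[OF assms(1)] assms(2,3) by metis+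

lemma Cent_id: "id \<in> Cent"
  unfolding Cent_def using C1_plus_id by simp

lemma Cent_comp: "V \<in> Cent \<Longrightarrow> W \<in> Cent \<Longrightarrow> V \<circ> W \<in> Cent"
  unfolding Cent_def by (auto intro: C1_plus_comp bij_comp)

lemma Cent_finv:
  assumes "W \<in> Cent"
  shows "finv W \<in> Cent"
proof -
  note W = CentD[OF assms]
  have "finv W (G t) = G (finv W t)" for t
    using W(3)[of "finv W t"] Cent_finv_simps[OF assms] by metis
  moreover have "finv W a = a" "finv W b = b"
    using W(4,5) Cent_finv_simps[OF assms] by metis+
  ultimately show ?thesis
    unfolding Cent_def using C1_plus_inv[OF W(1,2)] bij_imp_bij_inv[OF W(2)] by auto
qed

lemma Cent_funpow: "W \<in> Cent \<Longrightarrow> W ^^ n \<in> Cent"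
  by (induction n) (auto simp: Cent_comp Cent_id)

lemma eq_on_id_if_fixed_point:
  assumes W: "W \<in> Cent" and z: "a < z" "z < b" "W z = z"
  shows "eq_on W id"
  unfolding eq_on_def
  using Kopell[OF G_C2 G_surj CentD(1)[OF W] CentD(3)[OF W, symmetric] G_a G_b G_no_fixed z] by simp

lemma Cent_trichotomy:
  assumes V: "V \<in> Cent" and W: "W \<in> Cent"
  shows "lt_on V W \<or> lt_on W V \<or> eq_on V W"
proof -
  let ?U = "finv W \<circ> V"
  have U: "?U \<in> Cent" using Cent_comp[OF Cent_finv[OF W] V] .
  have W_U: "W (?U x) = V x" for x using W by simp
  note W_less = strict_mono_less[OF CentD(6)[OF W]]
  show ?thesis
  proof (cases "\<exists>z. a < z \<and> z < b \<and> ?U z = z")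
    case True
    then have "eq_on ?U id" using eq_on_id_if_fixed_point[OF U] by blast
    then have "eq_on V W" unfolding eq_on_def by (metis W_U id_apply)
    then show ?thesis by simp
  next
    case False
    then consider "\<And>x. a < x \<Longrightarrow> x < b \<Longrightarrow> ?U x < x" | "\<And>x. a < x \<Longrightarrow> x < b \<Longrightarrow> x < ?U x"
      using no_fixed_point_sign[OF CentD(7)[OF U], of a b] by blast
    then show ?thesis
    proof cases
      case 1
      then have "lt_on V W" unfolding lt_on_def by (metis W_U W_less)
      then show ?thesis by simp
    next
      case 2
      then have "lt_on W V" unfolding lt_on_def by (metis W_U W_less)
      then show ?thesis by simp
    qed
  qed
qed

lemma le_on_if_not_lt_on: "V \<in> Cent \<Longrightarrow> W \<in> Cent \<Longrightarrow> \<not> lt_on W V \<Longrightarrow> le_on V W"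
  using Cent_trichotomy[of V W] unfolding lt_on_def le_on_def eq_on_def by (auto simp: less_imp_le)

lemma Cent_archimedean:
  assumes d: "d \<in> Cent" "lt_on id d" and F: "F \<in> Cent"
  obtains m where "lt_on F (d ^^ m)"
proof -
  define z where "z = (a + b) / 2"
  have z: "a < z" "z < b" using a_less_b by (auto simp: z_def)
  have "\<exists>m. F z < (d ^^ m) z"
  proof (rule ccontr)
    assume "\<not> ?thesis"
    then have bounded: "(d ^^ m) z \<le> F z" for m by (simp add: not_less)
    have d_up: "x < d x" if "a < x" "x < b" for x using d(2) that by (simp add: lt_on_def)
    have orbit: "a < (d ^^ m) z" "(d ^^ m) z < b" for m
      using Cent_maps_gap[OF Cent_funpow[OF d(1)] z] by auto
    have "incseq (\<lambda>m. (d ^^ m) z)"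
      using d_up orbit by (intro incseq_SucI) (simp add: less_imp_le)
    then obtain L where L: "(\<lambda>m. (d ^^ m) z) \<longlonglongrightarrow> L"
      using incseq_convergent bounded by blast
    have "d L = L" using orbit_limit_fixed_point[OF CentD(7)[OF d(1)] L] .
    moreover have "a < L"
      using incseq_le[OF \<open>incseq _\<close> L, of 0] z by simp
    moreover have "L < b"
      using LIMSEQ_le_const2[OF L, of "F z"] bounded Cent_maps_gap[OF F z] by force
    ultimately show False using d_up by force
  qed
  then obtain m where m: "F z < (d ^^ m) z" by blast
  have "lt_on F (d ^^ m)"
    using Cent_trichotomy[OF F Cent_funpow[OF d(1)], of m] m z unfolding lt_on_def eq_on_def by force
  then show thesis by (rule that)
qed

lemma Cent_bracket:
  assumes d: "d \<in> Cent" "lt_on id d" and F: "F \<in> Cent" "lt_on id F"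
  obtains m where "le_on (d ^^ m) F" "lt_on F (d ^^ Suc m)"
proof -
  obtain k where k: "lt_on F (d ^^ k)" using Cent_archimedean[OF d F(1)] .
  have "\<not> lt_on F (d ^^ 0)"
    using F(2) a_less_b dense[OF a_less_b] unfolding lt_on_def by (metis funpow_0 id_apply less_asym)
  then obtain m where "\<not> lt_on F (d ^^ m)" "lt_on F (d ^^ Suc m)"
    using ex_least_nat_less[of "\<lambda>k. lt_on F (d ^^ k)" k] k by blast
  then show thesis
    using le_on_if_not_lt_on[OF Cent_funpow[OF d(1)] F(1)] that by blast
qed


lemma Cent_le_finv_iff:
  assumes "W \<in> Cent"
  shows "x \<le> finv W y \<longleftrightarrow> W x \<le> y"
  using strict_mono_less_eq[OF CentD(6)[OF assms], of x "finv W y"] assms by simp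

lemma eq_on_sym: "eq_on V W \<Longrightarrow> eq_on W V"
  unfolding eq_on_def by auto

lemma power_of_least_positive:
  assumes e: "e \<in> Cent" "lt_on id e" and least: "\<And>g. g \<in> Cent \<Longrightarrow> lt_on id g \<Longrightarrow> le_on e g"
    and X: "X \<in> Cent" "lt_on id X"
  obtains m where "eq_on X (e ^^ m)"
proof -
  obtain m where m: "le_on (e ^^ m) X" "lt_on X (e ^^ Suc m)"
    using Cent_bracket[OF e X] .
  let ?E = "e ^^ m"
  have E: "?E \<in> Cent" using Cent_funpow[OF e(1)] .
  let ?g = "finv ?E \<circ> X"
  have g: "?g \<in> Cent" using Cent_comp[OF Cent_finv[OF E] X(1)] .
  have "\<not> lt_on id ?g"
  proof
    assume "lt_on id ?g"
    then have "le_on e ?g" using least[OF g] by blast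
    obtain z where z: "a < z" "z < b" using dense[OF a_less_b] by blast
    have "e z \<le> ?g z" using \<open>le_on e ?g\<close> z unfolding le_on_def by blast
    then have "(e ^^ Suc m) z \<le> X z" using Cent_le_finv_iff[OF E] by (simp add: funpow_swap1)
    moreover have "X z < (e ^^ Suc m) z" using m(2) z unfolding lt_on_def by blast
    ultimately show False by simp
  qed
  moreover have "\<not> lt_on ?g id"
    using m(1) Cent_le_finv_iff[OF E] dense[OF a_less_b] unfolding lt_on_def le_on_def
    by (metis comp_apply id_apply not_less)
  ultimately have "eq_on ?g id" using Cent_trichotomy[OF g Cent_id] by blast
  then have "eq_on X ?E" unfolding eq_on_def using E by (metis Cent_finv_simps(1) comp_apply id_apply)
  then show thesis by (rule that)
qed

lemma funpow_Suc_Suc: "(d ^^ Suc m) ((d ^^ Suc n) x) = d (d ((d ^^ n) ((d ^^ m) x)))"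
proof -
  have "(d ^^ Suc m) ((d ^^ Suc n) x) = (d ^^ (Suc m + Suc n)) x"
    by (simp only: funpow_add o_apply)
  also have "Suc m + Suc n = Suc (Suc (n + m))" by simp
  also have "(d ^^ Suc (Suc (n + m))) x = d (d ((d ^^ n) ((d ^^ m) x)))"
    by (simp only: funpow.simps o_apply funpow_add)
  finally show ?thesis .
qed

lemma commutator_bound:
  assumes d: "d \<in> Cent" "lt_on id d" and F: "F \<in> Cent" "lt_on id F" and H: "H \<in> Cent" "lt_on id H"
  shows "lt_on (F \<circ> H) (d \<circ> d \<circ> (H \<circ> F))"
  unfolding lt_on_def
proof (intro allI impI)
  fix x assume x: "a < x \<and> x < b"
  obtain m where m: "le_on (d ^^ m) F" "lt_on F (d ^^ Suc m)" using Cent_bracket[OF d F] .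
  obtain n where n: "le_on (d ^^ n) H" "lt_on H (d ^^ Suc n)" using Cent_bracket[OF d H] .
  have mono: "strict_mono (d ^^ k)" for k using CentD(6)[OF Cent_funpow[OF d(1)]] .
  have "(F \<circ> H) x < (d ^^ Suc m) (H x)"
    using m(2) Cent_maps_gap[OF H(1)] x unfolding lt_on_def by simp
  also have "\<dots> < (d ^^ Suc m) ((d ^^ Suc n) x)"
    using n(2) x strict_mono_less[OF mono] unfolding lt_on_def by blast
  also have "\<dots> = d (d ((d ^^ n) ((d ^^ m) x)))" by (rule funpow_Suc_Suc)
  also have "\<dots> \<le> d (d ((d ^^ n) (F x)))"
    using m(1) x strict_mono_less_eq[OF mono] strict_mono_less_eq[OF CentD(6)[OF d(1)]]
    unfolding le_on_def by simp
  also have "\<dots> \<le> d (d (H (F x)))"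
    using n(1) Cent_maps_gap[OF F(1)] x strict_mono_less_eq[OF CentD(6)[OF d(1)]]
    unfolding le_on_def by simp
  finally show "(F \<circ> H) x < (d \<circ> d \<circ> (H \<circ> F)) x" by simp
qed

lemma least_positive_if_no_small_square:
  assumes e: "e \<in> Cent" and no_small: "\<not> (\<exists>d\<in>Cent. lt_on id d \<and> le_on (d \<circ> d) e)"
    and g: "g \<in> Cent" "lt_on id g"
  shows "le_on e g"
proof (rule ccontr)
  assume "\<not> le_on e g"
  then have "lt_on g e"
    using Cent_trichotomy[OF g(1) e] unfolding lt_on_def le_on_def eq_on_def by (auto simp: less_imp_le)
  have "\<not> le_on (g \<circ> g) e" using no_small g by blast
  then have "lt_on e (g \<circ> g)" using le_on_if_not_lt_on[OF Cent_comp[OF g(1) g(1)] e] by blast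
  define d where "d = e \<circ> finv g"
  have d: "d \<in> Cent" unfolding d_def using Cent_comp[OF e Cent_finv[OF g(1)]] .
  have d_less_g: "d y < g y" and d_pos: "y < d y" if "a < y" "y < b" for y
  proof -
    have z: "a < finv g y" "finv g y < b" using Cent_maps_gap[OF Cent_finv[OF g(1)]] that by auto
    show "d y < g y"
      using \<open>lt_on e (g \<circ> g)\<close> z g(1) unfolding lt_on_def d_def by (metis Cent_finv_simps(1) comp_apply)
    show "y < d y"
      using \<open>lt_on g e\<close> z g(1) unfolding lt_on_def d_def by (metis Cent_finv_simps(1) comp_apply)
  qed
  have "le_on (d \<circ> d) e"
    unfolding le_on_def
  proof (intro allI impI)
    fix y assume y: "a < y \<and> y < b"
    have "d (d y) < d (g y)"
      using d_less_g y strict_mono_less[OF CentD(6)[OF d]] by blast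
    also have "d (g y) = e y" unfolding d_def using g(1) by simp
    finally show "(d \<circ> d) y \<le> e y" by simp
  qed
  then show False using no_small d d_pos unfolding lt_on_def by auto
qed

lemma Cent_quotient_positive:
  assumes P: "P \<in> Cent" and Q: "Q \<in> Cent" and "lt_on Q P"
  obtains e where "e \<in> Cent" "lt_on id e" "\<And>x. e (Q x) = P x"
proof
  show "P \<circ> finv Q \<in> Cent" using Cent_comp[OF P Cent_finv[OF Q]] .
  show "(P \<circ> finv Q) (Q x) = P x" for x using Q by simp
  show "lt_on id (P \<circ> finv Q)"
    unfolding lt_on_def
  proof (intro allI impI)
    fix y assume "a < y \<and> y < b"
    then have "a < finv Q y" "finv Q y < b" using Cent_maps_gap[OF Cent_finv[OF Q]] by auto
    then have "Q (finv Q y) < P (finv Q y)" using \<open>lt_on Q P\<close> unfolding lt_on_def by blast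
    then show "id y < (P \<circ> finv Q) y" using Q by simp
  qed
qed

text \<open>Hoelder's argument: the quotient e = FH (HF)^-1 is positive. If e has a positive square
  root bound d (d d <= e), then FH < d d HF <= e HF = FH; otherwise e is the least positive
  element, so F and H are powers of e and commute.\<close>

lemma not_lt_on_commutator:
  assumes F: "F \<in> Cent" "lt_on id F" and H: "H \<in> Cent" "lt_on id H"
  shows "\<not> lt_on (H \<circ> F) (F \<circ> H)"
proof
  assume QP: "lt_on (H \<circ> F) (F \<circ> H)"
  have Q: "H \<circ> F \<in> Cent" using Cent_comp F H by auto
  obtain e where e: "e \<in> Cent" "lt_on id e" and e_Q: "\<And>x. e (H (F x)) = F (H x)"
    using Cent_quotient_positive[OF Cent_comp[OF F(1) H(1)] Q QP] by auto
  obtain x where x: "a < x" "x < b" using dense[OF a_less_b] by blast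
  show False
  proof (cases "\<exists>d\<in>Cent. lt_on id d \<and> le_on (d \<circ> d) e")
    case True
    then obtain d where d: "d \<in> Cent" "lt_on id d" "le_on (d \<circ> d) e" by blast
    have "F (H x) < d (d (H (F x)))"
      using commutator_bound[OF d(1,2) F H] x unfolding lt_on_def by simp
    also have "\<dots> \<le> e (H (F x))"
      using d(3) Cent_maps_gap[OF Q x] unfolding le_on_def by simp
    also have "\<dots> = F (H x)" by (rule e_Q)
    finally show False by simp
  next
    case False
    note least = least_positive_if_no_small_square[OF e(1) False]
    obtain m where m: "eq_on F (e ^^ m)" using power_of_least_positive[OF e least F] .
    obtain n where n: "eq_on H (e ^^ n)" using power_of_least_positive[OF e least H] .
    have "F (H x) = (e ^^ m) ((e ^^ n) x)"
      using m n x Cent_maps_gap[OF H(1) x] unfolding eq_on_def by simp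
    also have "\<dots> = (e ^^ n) ((e ^^ m) x)"
      by (metis add.commute comp_apply funpow_add)
    also have "\<dots> = H (F x)"
      using m n x Cent_maps_gap[OF F(1) x] unfolding eq_on_def by simp
    finally show False using QP x unfolding lt_on_def by force
  qed
qed

lemma positive_elements_commute:
  assumes "F \<in> Cent" "lt_on id F" "H \<in> Cent" "lt_on id H"
  shows "eq_on (F \<circ> H) (H \<circ> F)"
  using Cent_trichotomy[OF Cent_comp[OF assms(1,3)] Cent_comp[OF assms(3,1)]]
    not_lt_on_commutator[OF assms] not_lt_on_commutator[OF assms(3,4,1,2)]
  by blast

lemma Cent_cases:
  assumes X: "X \<in> Cent"
  obtains "eq_on X id" | "lt_on id X" | "lt_on id (finv X)"
proof -
  have "lt_on id (finv X)" if "lt_on X id"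
    unfolding lt_on_def
  proof (intro allI impI)
    fix y assume "a < y \<and> y < b"
    then have "a < finv X y" "finv X y < b" using Cent_maps_gap[OF Cent_finv[OF X]] by auto
    then have "X (finv X y) < finv X y" using that unfolding lt_on_def by simp
    then show "id y < finv X y" using X by simp
  qed
  then show thesis using Cent_trichotomy[OF X Cent_id] that by blast
qed

lemma eq_on_commute_if_eq_on_id:
  assumes "eq_on X id" "Y \<in> Cent"
  shows "eq_on (X \<circ> Y) (Y \<circ> X)"
  using assms Cent_maps_gap[OF assms(2)] unfolding eq_on_def by simp

lemma eq_on_commute_if_finv_commutes:
  assumes X: "X \<in> Cent" and Y: "Y \<in> Cent" and comm: "eq_on (finv X \<circ> Y) (Y \<circ> finv X)"
  shows "eq_on (X \<circ> Y) (Y \<circ> X)"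
  unfolding eq_on_def
proof (intro allI impI)
  fix x assume "a < x \<and> x < b"
  then have "finv X (Y (X x)) = Y x"
    using comm Cent_maps_gap[OF X] X unfolding eq_on_def by (metis Cent_finv_simps(2) comp_apply)
  then show "(X \<circ> Y) x = (Y \<circ> X) x" using X by (metis Cent_finv_simps(1) comp_apply)
qed

lemma positive_commutes_with_Cent:
  assumes F: "F \<in> Cent" "lt_on id F" and H: "H \<in> Cent"
  shows "eq_on (F \<circ> H) (H \<circ> F)"
  using H
proof (cases rule: Cent_cases)
  case 1
  then show ?thesis using eq_on_commute_if_eq_on_id[OF 1 F(1)] eq_on_sym by blast
next
  case 2
  then show ?thesis using positive_elements_commute[OF F H] by blast
next
  case 3
  then have "eq_on (finv H \<circ> F) (F \<circ> finv H)"
    using positive_elements_commute[OF Cent_finv[OF H] 3 F] by blast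
  then show ?thesis using eq_on_commute_if_finv_commutes[OF H F(1)] eq_on_sym by blast
qed

theorem Cent_commute:
  assumes F: "F \<in> Cent" and H: "H \<in> Cent"
  shows "eq_on (F \<circ> H) (H \<circ> F)"
  using F
proof (cases rule: Cent_cases)
  case 1
  then show ?thesis using eq_on_commute_if_eq_on_id[OF 1 H] by blast
next
  case 2
  then show ?thesis using positive_commutes_with_Cent[OF F 2 H] by blast
next
  case 3
  then show ?thesis
    using positive_commutes_with_Cent[OF Cent_finv[OF F] 3 H] eq_on_commute_if_finv_commutes[OF F H]
    by blast
qed

end

section \<open>Degree-one lifts\<close>

definition admissible_lift :: "(real \<Rightarrow> real) \<Rightarrow> bool" where
  "admissible_lift F \<longleftrightarrow>
     C2_plus F \<and> (\<forall>t. F (t + 1) = F t + 1) \<and> (\<exists>t. F t = t) \<and> interior {t. F t = t} = {}"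

lemma degree_one_shift_int:
  fixes F :: "real \<Rightarrow> real"
  assumes "\<And>t. F (t + 1) = F t + 1"
  shows "F (t + of_int k) = F t + of_int k"
proof -
  have nat_shift: "F (t + of_nat n) = F t + of_nat n" for t n
  proof (induction n)
    case (Suc n)
    have "F (t + of_nat (Suc n)) = F ((t + of_nat n) + 1)" by (simp add: algebra_simps)
    then show ?case using Suc assms by simp
  qed simp
  show ?thesis
  proof (cases "k \<ge> 0")
    case True
    then show ?thesis using nat_shift[of t "nat k"] by simp
  next
    case False
    then show ?thesis using nat_shift[of "t + of_int k" "nat (- k)"] by simp
  qed
qed

lemma admissible_lift_strict_mono: "admissible_lift F \<Longrightarrow> strict_mono F"
  unfolding admissible_lift_def using C1_plus_strict_mono C2_plus_imp_C1_plus by blast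

lemma admissible_lift_continuous: "admissible_lift F \<Longrightarrow> continuous_on UNIV F"
  unfolding admissible_lift_def
  using C1_plus_isCont C2_plus_imp_C1_plus continuous_at_imp_continuous_on by blast

lemma admissible_lift_surj:
  assumes "admissible_lift F"
  shows "surj F"
proof -
  have shift: "\<And>t. F (t + 1) = F t + 1" using assms unfolding admissible_lift_def by blast
  have "y \<in> range F" for y
  proof -
    let ?k = "\<lfloor>y - F 0\<rfloor>" and ?l = "\<lceil>y - F 0\<rceil>"
    have "F (of_int ?k) \<le> y" "y \<le> F (of_int ?l)" "of_int ?k \<le> (of_int ?l :: real)"
      using degree_one_shift_int[of F, OF shift, of 0] by (auto simp: floor_le_ceiling) linarith+
    then show ?thesis
      using IVT'[of F "of_int ?k" y "of_int ?l"] admissible_lift_continuous[OF assms]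
      by (auto intro: continuous_on_subset)
  qed
  then show ?thesis by blast
qed

lemma admissible_lift_bij:
  assumes "admissible_lift F"
  shows "bij F"
  using admissible_lift_surj[OF assms] strict_mono_imp_inj_on[OF admissible_lift_strict_mono[OF assms]]
  by (simp add: bij_def)

lemma closed_gap_around:
  fixes P :: "real set"
  assumes "closed P" "x \<notin> P" "p \<in> P" "p < x" "q \<in> P" "x < q"
  obtains a b where "a \<in> P" "b \<in> P" "a < x" "x < b" "\<And>y. a < y \<Longrightarrow> y < b \<Longrightarrow> y \<notin> P"
proof -
  let ?L = "P \<inter> {..x}" and ?R = "P \<inter> {x..}"
  have L: "bdd_above ?L" and R: "bdd_below ?R" by (auto simp: bdd_above_def bdd_below_def)
  have "Sup ?L \<in> ?L"
    using assms L by (intro closed_contains_Sup) (auto intro: closed_Int)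
  moreover have "Inf ?R \<in> ?R"
    using assms R by (intro closed_contains_Inf) (auto intro: closed_Int)
  moreover have "y \<notin> P" if "Sup ?L < y" "y < Inf ?R" for y
    using cSup_upper[OF _ L, of y] cInf_lower[OF _ R, of y] that by (cases "y \<le> x") auto
  ultimately show thesis
    using that[of "Sup ?L" "Inf ?R"] assms(2) by (metis IntD1 IntD2 atLeast_iff atMost_iff order_le_less)
qed

lemma fixed_point_gap:
  assumes F: "admissible_lift F" and "F x \<noteq> x"
  obtains a b where "a < x" "x < b" "F a = a" "F b = b" "\<And>y. a < y \<Longrightarrow> y < b \<Longrightarrow> F y \<noteq> y"
proof -
  obtain t0 where t0: "F t0 = t0" and shift: "\<And>t. F (t + 1) = F t + 1"
    using F unfolding admissible_lift_def by blast
  have fixed: "t0 + of_int k \<in> {t. F t = t}" for k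
    using degree_one_shift_int[of F, OF shift, of t0 k] t0 by simp
  have closed: "closed {t. F t = t}"
    using admissible_lift_continuous[OF F] by (intro closed_Collect_eq) (auto intro: continuous_intros)
  have below: "t0 + of_int (\<lfloor>x - t0\<rfloor> - 1) < x" and above: "x < t0 + of_int (\<lceil>x - t0\<rceil> + 1)"
    by linarith+
  show thesis
  proof (rule closed_gap_around[OF closed _ fixed below fixed above])
    show "x \<notin> {t. F t = t}" using \<open>F x \<noteq> x\<close> by simp
  qed (use that in auto)
qed

lemma commuting_bij_fixes_gap_ends:
  fixes F H :: "real \<Rightarrow> real"
  assumes H: "strict_mono H" "surj H" and comm: "\<And>t. F (H t) = H (F t)" and "H x = x"
    and gap: "a < x" "x < b" "F a = a" "F b = b" "\<And>y. a < y \<Longrightarrow> y < b \<Longrightarrow> F y \<noteq> y"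
  shows "H a = a" "H b = b"
proof -
  have fixed_image: "F (H z) = H z" if "F z = z" for z using comm[of z] that by simp
  have fixed_preimage: "F y = y" if "F (H y) = H y" for y
    using comm[of y] that strict_mono_eq[OF H(1)] by simp
  obtain ya yb where ya: "H ya = a" and yb: "H yb = b" using H(2) by (metis surjD)
  have "H a \<le> a"
    using gap(5)[of "H a"] fixed_image[OF gap(3)] strict_mono_less[OF H(1), of a x] gap(1,2) \<open>H x = x\<close>
    by force
  moreover have "a \<le> H a"
  proof -
    have "ya < x" using ya \<open>H x = x\<close> gap(1) strict_mono_less[OF H(1)] by metis
    then have "ya \<le> a" using gap(5)[of ya] fixed_preimage[of ya] ya gap(2,3) by force
    then show ?thesis using ya strict_mono_less_eq[OF H(1)] by metis
  qed
  ultimately show "H a = a" by simp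
  have "b \<le> H b"
    using gap(5)[of "H b"] fixed_image[OF gap(4)] strict_mono_less[OF H(1), of x b] gap(1,2) \<open>H x = x\<close>
    by force
  moreover have "H b \<le> b"
  proof -
    have "x < yb" using yb \<open>H x = x\<close> gap(2) strict_mono_less[OF H(1)] by metis
    then have "b \<le> yb" using gap(5)[of yb] fixed_preimage[of yb] yb gap(1,4) by force
    then show ?thesis using yb strict_mono_less_eq[OF H(1)] by metis
  qed
  ultimately show "H b = b" by simp
qed

text \<open>H permutes Fix F, so it fixes the ends of the gap of Fix F around x; by Kopell's lemma H
  is then the identity on that gap, contradicting interior (Fix H) = {}.\<close>

lemma commuting_lift_fixes_fixed_point:
  assumes F: "admissible_lift F" and H: "admissible_lift H" and comm: "\<And>t. F (H t) = H (F t)"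
    and "H x = x"
  shows "F x = x"
proof (rule ccontr)
  assume "F x \<noteq> x"
  then obtain a b where gap: "a < x" "x < b" "F a = a" "F b = b" "\<And>y. a < y \<Longrightarrow> y < b \<Longrightarrow> F y \<noteq> y"
    using fixed_point_gap[OF F] by blast
  have "H a = a" "H b = b"
    using commuting_bij_fixes_gap_ends[of H F, OF admissible_lift_strict_mono[OF H] admissible_lift_surj[OF H]
        comm \<open>H x = x\<close> gap] by simp_all
  have "H y = y" if "a < y" "y < b" for y
    using Kopell[of F H a b x y, OF _ admissible_lift_surj[OF F] _ comm gap(3,4) gap(5) gap(1,2)
        \<open>H x = x\<close> that] F H C2_plus_imp_C1_plus unfolding admissible_lift_def by blast
  then have "{a<..<b} \<subseteq> interior {t. H t = t}"
    by (intro interior_maximal) auto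
  then show False using H gap(1,2) unfolding admissible_lift_def by auto
qed

lemma commuting_lifts_same_fixed_points:
  assumes "admissible_lift F" "admissible_lift H" "\<And>t. F (H t) = H (F t)"
  shows "F x = x \<longleftrightarrow> H x = x"
proof
  assume "F x = x"
  then show "H x = x"
    by (rule commuting_lift_fixes_fixed_point[of H F, OF assms(2,1) assms(3)[symmetric]])
next
  assume "H x = x"
  then show "F x = x"
    by (rule commuting_lift_fixes_fixed_point[of F H, OF assms])
qed

lemma admissible_lifts_commute_via:
  assumes A: "admissible_lift A" and B: "admissible_lift B" and C: "admissible_lift C"
    and AC: "\<And>t. A (C t) = C (A t)" and BC: "\<And>t. B (C t) = C (B t)"
  shows "A (B x) = B (A x)"
proof (cases "C x = x")
  case True
  then have "A x = x" "B x = x"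
    using commuting_lifts_same_fixed_points[of A C x, OF A C AC]
      commuting_lifts_same_fixed_points[of B C x, OF B C BC] by simp_all
  then show ?thesis by simp
next
  case False
  obtain a b where gap: "a < x" "x < b" "C a = a" "C b = b" "\<And>y. a < y \<Longrightarrow> y < b \<Longrightarrow> C y \<noteq> y"
    using fixed_point_gap[OF C False] by blast
  interpret centralizer_on_gap C a b
  proof
    show "C2_plus C" using C unfolding admissible_lift_def by blast
  qed (use gap admissible_lift_surj[OF C] in auto)
  have in_Cent: "D \<in> Cent" if D: "admissible_lift D" "\<And>t. D (C t) = C (D t)" for D
  proof -
    have "D a = a" "D b = b"
      using commuting_lifts_same_fixed_points[of D C a, OF D(1) C D(2)]
        commuting_lifts_same_fixed_points[of D C b, OF D(1) C D(2)] gap(3,4) by simp_all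
    then show ?thesis
      unfolding Cent_def using D admissible_lift_bij[OF D(1)] C2_plus_imp_C1_plus
      by (auto simp: admissible_lift_def)
  qed
  have "eq_on (A \<circ> B) (B \<circ> A)"
    using Cent_commute[OF in_Cent[of A, OF A AC] in_Cent[of B, OF B BC]] .
  then show ?thesis using gap(1,2) unfolding eq_on_def by simp
qed


section \<open>Lifts of circle diffeomorphisms\<close>

definition is_lift :: "(real \<Rightarrow> real) \<Rightarrow> (complex \<Rightarrow> complex) \<Rightarrow> bool" where
  "is_lift F g \<longleftrightarrow> (\<forall>t. g (cis (2 * pi * t)) = cis (2 * pi * F t))"

lemma cis_2pi_eq_iff: "cis (2 * pi * u) = cis (2 * pi * v) \<longleftrightarrow> u - v \<in> \<int>"
proof
  assume "cis (2 * pi * u) = cis (2 * pi * v)"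
  then have "cos (2 * pi * u - 2 * pi * v) = 1"
    using cis_divide[of "2 * pi * u" "2 * pi * v"] by (metis cis.sel(1) divide_self_if cis_neq_zero one_complex.sel(1))
  then obtain n :: int where "2 * pi * u - 2 * pi * v = of_int n * 2 * pi"
    using cos_one_2pi_int by blast
  then have "(2 * pi) * (u - v) = (2 * pi) * of_int n" by (simp add: algebra_simps)
  then have "u - v = of_int n" by simp
  then show "u - v \<in> \<int>" by simp
next
  assume "u - v \<in> \<int>"
  then obtain k where k: "u = v + of_int k" by (metis Ints_cases add_diff_cancel_left' diff_add_cancel add.commute)
  have "cis (2 * pi * u) = cis (2 * pi * v) * cis (2 * pi * of_int k)"
    by (simp add: k cis_mult algebra_simps)
  also have "cis (2 * pi * of_int k) = 1" by (rule cis_multiple_2pi) simp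
  finally show "cis (2 * pi * u) = cis (2 * pi * v)" by simp
qed

lemma S1_eq_range_cis: "S1 = range (\<lambda>t. cis (2 * pi * t))"
proof
  show "S1 \<subseteq> range (\<lambda>t. cis (2 * pi * t))"
  proof
    fix z assume "z \<in> S1"
    then have "norm z = 1" by (simp add: S1_def)
    then have "z \<noteq> 0" by auto
    then have "cis (Arg z) = z"
      using cis_Arg[of z] \<open>norm z = 1\<close> by (simp add: sgn_div_norm)
    then show "z \<in> range (\<lambda>t. cis (2 * pi * t))"
      by (intro range_eqI[of _ _ "Arg z / (2 * pi)"]) simp
  qed
qed (auto simp: S1_def)

lemma diff2_plus_lift_with_fixed_point:
  assumes "diff2_plus g" and "\<exists>z\<in>S1. g z = z"
  obtains F where "C2_plus F" "\<And>t. F (t + 1) = F t + 1" "\<exists>t. F t = t" "is_lift F g"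
proof -
  obtain F0 F' F'' :: "real \<Rightarrow> real" where
    lift: "\<forall>t. g (cis (2 * pi * t)) = cis (2 * pi * F0 t)" and shift: "\<forall>t. F0 (t + 1) = F0 t + 1"
    and F0: "\<forall>t. (F0 has_real_derivative F' t) (at t)" "\<forall>t. (F' has_real_derivative F'' t) (at t)"
      "continuous_on UNIV F''" "\<forall>t. F' t > 0"
    using assms(1) unfolding diff2_plus_def by blast
  obtain s where "g (cis (2 * pi * s)) = cis (2 * pi * s)"
    using assms(2) unfolding S1_eq_range_cis by blast
  then have "F0 s - s \<in> \<int>" using lift cis_2pi_eq_iff[of "F0 s" s] by simp
  then obtain k :: int where k: "F0 s = s + of_int k" by (metis Ints_cases add.commute diff_add_cancel)
  let ?F = "\<lambda>t. F0 t - of_int k"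
  have "C2_plus ?F"
    unfolding C2_plus_def using F0 by (intro exI[of _ F'] exI[of _ F'']) (auto intro!: derivative_eq_intros)
  moreover have "cis (2 * pi * ?F t) = cis (2 * pi * F0 t)" for t
    using cis_2pi_eq_iff[of "?F t" "F0 t"] by simp
  then have "is_lift ?F g" unfolding is_lift_def using lift by simp
  moreover have "?F s = s" using k by simp
  ultimately show thesis using shift by (intro that[of ?F]) auto
qed

lemma openin_S1_cis_image:
  assumes "open U"
  shows "openin (top_of_set S1) ((\<lambda>t. cis (2 * pi * t)) ` U)"
proof -
  let ?V = "(\<lambda>z. Im z / (2 * pi)) -` U"
  have "open ?V" using assms by (intro open_vimage continuous_intros) auto
  then have "openin (top_of_set (- {0})) (exp ` ?V)"
    by (intro covering_space_open_map[OF covering_space_exp_punctured_plane]) simp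
  then have "open (exp ` ?V)" by (rule openin_open_trans) (simp add: open_Compl)
  moreover have "(\<lambda>t. cis (2 * pi * t)) ` U = S1 \<inter> exp ` ?V"
  proof (intro equalityI subsetI)
    fix z assume "z \<in> (\<lambda>t. cis (2 * pi * t)) ` U"
    then obtain t where "t \<in> U" "z = exp (\<i> * of_real (2 * pi * t))"
      by (auto simp: cis_conv_exp)
    then show "z \<in> S1 \<inter> exp ` ?V" by (auto simp: S1_def)
  next
    fix z assume "z \<in> S1 \<inter> exp ` ?V"
    then obtain w where w: "z = exp w" "Im w / (2 * pi) \<in> U" "exp (Re w) = 1"
      by (auto simp: S1_def)
    then have "w = \<i> * of_real (2 * pi * (Im w / (2 * pi)))"
      by (simp add: complex_eq_iff)
    then show "z \<in> (\<lambda>t. cis (2 * pi * t)) ` U"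
      using w by (metis cis_conv_exp image_eqI)
  qed
  ultimately show ?thesis by (simp add: openin_open_Int)
qed

lemma lift_fixed_set_interior:
  assumes lift: "is_lift F g" and "fully_supported g"
  shows "interior {t. F t = t} = {}"
proof -
  let ?U = "interior {t. F t = t}"
  have "(\<lambda>t. cis (2 * pi * t)) ` ?U \<subseteq> fix_set g"
    using interior_subset[of "{t. F t = t}"] lift
    by (auto simp: fix_set_def is_lift_def S1_eq_range_cis)
  then have "(\<lambda>t. cis (2 * pi * t)) ` ?U \<subseteq> top_of_set S1 interior_of fix_set g"
    using openin_S1_cis_image[OF open_interior] by (rule interior_of_maximal)
  then show ?thesis using assms(2) unfolding fully_supported_def by auto
qed

lemma exists_admissible_lift:
  assumes "diff2_plus g" "fully_supported g" "\<exists>z\<in>S1. g z = z"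
  obtains F where "admissible_lift F" "is_lift F g"
proof -
  obtain F where F: "C2_plus F" "\<And>t. F (t + 1) = F t + 1" "\<exists>t. F t = t" "is_lift F g"
    using diff2_plus_lift_with_fixed_point[OF assms(1,3)] by blast
  have "admissible_lift F"
    using F lift_fixed_set_interior[OF F(4) assms(2)] unfolding admissible_lift_def by blast
  then show thesis using F(4) by (rule that)
qed

lemma degree_one_integer_displacement:
  fixes F :: "real \<Rightarrow> real"
  assumes mono: "strict_mono F" and shift: "\<And>t. F (t + 1) = F t + 1" and "F t0 = t0"
    and "F x - x \<in> \<int>"
  shows "F x = x"
proof -
  let ?j = "\<lfloor>x - t0\<rfloor>"
  have fixed: "F (t0 + of_int i) = t0 + of_int i" for i
    using degree_one_shift_int[of F, OF shift] \<open>F t0 = t0\<close> by simp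
  have "t0 + of_int ?j \<le> x" "x < t0 + of_int (?j + 1)" by linarith+
  then have "t0 + of_int ?j \<le> F x" "F x < t0 + of_int (?j + 1)"
    using strict_mono_less_eq[OF mono] strict_mono_less[OF mono] fixed by metis+
  then have "\<bar>F x - x\<bar> < 1" using \<open>t0 + of_int ?j \<le> x\<close> \<open>x < t0 + of_int (?j + 1)\<close> by simp
  then show ?thesis using Ints_nonzero_abs_ge1[OF assms(4)] by fastforce
qed

text \<open>F (H t) - H (F t) is continuous and integer-valued, hence a constant k. At a fixed point
  t0 of F this gives F (H t0) = H t0 + k, and a degree-one map with a fixed point moves no point
  by a nonzero integer.\<close>

lemma lifts_commute:
  assumes F: "admissible_lift F" and H: "admissible_lift H"
    and lifts: "is_lift F g" "is_lift H h" and comm: "commute_on_S1 g h"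
  shows "F (H t) = H (F t)"
proof -
  let ?D = "\<lambda>t. F (H t) - H (F t)"
  have D_int: "?D t \<in> \<int>" for t
  proof -
    have "g (h (cis (2 * pi * t))) = h (g (cis (2 * pi * t)))"
      using comm unfolding commute_on_S1_def S1_eq_range_cis by blast
    then show ?thesis using lifts cis_2pi_eq_iff unfolding is_lift_def by simp
  qed
  have "continuous_on UNIV ?D"
    using admissible_lift_continuous[OF F] admissible_lift_continuous[OF H]
    by (intro continuous_intros) (auto intro: continuous_on_compose2)
  then have "?D constant_on UNIV"
  proof (rule continuous_discrete_range_constant[OF connected_UNIV])
    show "\<exists>e>0. \<forall>y. y \<in> UNIV \<and> ?D y \<noteq> ?D x \<longrightarrow> e \<le> norm (?D y - ?D x)" for x
    proof (intro exI[of _ 1] conjI allI impI)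
      fix y assume "y \<in> UNIV \<and> ?D y \<noteq> ?D x"
      then show "1 \<le> norm (?D y - ?D x)"
        using Ints_nonzero_abs_ge1[OF Ints_diff[OF D_int[of y] D_int[of x]]] by simp
    qed simp
  qed
  then obtain k where k: "\<And>t. ?D t = k" by (auto simp: constant_on_def)
  obtain t0 where "F t0 = t0" using F unfolding admissible_lift_def by blast
  then have "F (H t0) - H t0 \<in> \<int>" using D_int[of t0] by simp
  then have "F (H t0) = H t0"
    using degree_one_integer_displacement[OF admissible_lift_strict_mono[OF F] _ \<open>F t0 = t0\<close>] F
    unfolding admissible_lift_def by blast
  then show ?thesis using k[of t] k[of t0] \<open>F t0 = t0\<close> by simp
qed

lemma commute_on_S1_if_lifts_commute:
  assumes "is_lift F g" "is_lift H h" "\<And>t. F (H t) = H (F t)"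
  shows "commute_on_S1 g h"
  using assms unfolding commute_on_S1_def is_lift_def S1_eq_range_cis by auto

lemma lift_bij_betw_S1:
  assumes F: "admissible_lift F" and lift: "is_lift F g"
  shows "bij_betw g S1 S1"
proof -
  have shift: "\<And>t. F (t + 1) = F t + 1" using F unfolding admissible_lift_def by blast
  have g_cis: "g (cis (2 * pi * t)) = cis (2 * pi * F t)" for t using lift unfolding is_lift_def by blast
  have "inj_on g S1"
  proof (rule inj_onI)
    fix z1 z2 assume "z1 \<in> S1" "z2 \<in> S1" "g z1 = g z2"
    then obtain t1 t2 where t: "z1 = cis (2 * pi * t1)" "z2 = cis (2 * pi * t2)"
      and "cis (2 * pi * F t1) = cis (2 * pi * F t2)"
      by (auto simp: S1_eq_range_cis g_cis)
    then obtain k :: int where "F t1 = F t2 + of_int k"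
      using cis_2pi_eq_iff by (metis Ints_cases add.commute diff_add_cancel)
    then have "F t1 = F (t2 + of_int k)" using degree_one_shift_int[of F, OF shift] by simp
    then have "t1 - t2 \<in> \<int>"
      using strict_mono_eq[OF admissible_lift_strict_mono[OF F]] by simp
    then show "z1 = z2" using t cis_2pi_eq_iff by simp
  qed
  moreover have "g ` S1 = (\<lambda>s. cis (2 * pi * s)) ` range F"
    by (simp add: S1_eq_range_cis g_cis image_image)
  then have "g ` S1 = S1"
    using admissible_lift_surj[OF F] by (simp add: S1_eq_range_cis)
  ultimately show ?thesis by (simp add: bij_betw_def)
qed

lemma lifts_commute_along_comm_graph:
  assumes conn: "comm_graph_connected gs"
    and L: "\<And>g. g \<in> gs \<Longrightarrow> admissible_lift (L g) \<and> is_lift (L g) g"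
    and "g \<in> gs" "h \<in> gs"
  shows "L g (L h t) = L h (L g t)"
proof -
  let ?E = "{(x, y). x \<in> gs \<and> y \<in> gs \<and> commute_on_S1 x y}"
  have "(g, h) \<in> ?E\<^sup>*" using conn assms(3,4) unfolding comm_graph_connected_def by blast
  then have "\<forall>t. L g (L h t) = L h (L g t)"
  proof (induction rule: rtrancl_induct)
    case (step y z)
    then have "y \<in> gs" "z \<in> gs" "commute_on_S1 y z" by auto
    then have "L y (L z t) = L z (L y t)" for t
      using lifts_commute L by blast
    then show ?case
      using admissible_lifts_commute_via[of "L g" "L z" "L y"] L \<open>g \<in> gs\<close> \<open>y \<in> gs\<close> \<open>z \<in> gs\<close> step.IH
      by simp
  qed simp
  then show ?thesis by blast
qed

section \<open>Commuting generators\<close>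

lemma (in group) commute_with_generate:
  assumes H: "H \<subseteq> carrier G" and a: "a \<in> carrier G" and comm: "\<And>h. h \<in> H \<Longrightarrow> a \<otimes> h = h \<otimes> a"
    and "x \<in> generate G H"
  shows "a \<otimes> x = x \<otimes> a"
  using \<open>x \<in> generate G H\<close>
proof induction
  case (inv h)
  have h: "h \<in> carrier G" using H inv by blast
  have "h \<otimes> (a \<otimes> inv h) = (h \<otimes> a) \<otimes> inv h" using a h by (simp add: m_assoc)
  also have "\<dots> = (a \<otimes> h) \<otimes> inv h" using comm[OF inv] by simp
  also have "\<dots> = a" using a h by (simp add: m_assoc)
  finally show ?case using inv_solve_left[of "a \<otimes> inv h" h a] a h by simp
next
  case (eng x y)
  have xy: "x \<in> carrier G" "y \<in> carrier G" using eng generate_in_carrier[OF H] by auto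
  have "a \<otimes> (x \<otimes> y) = (a \<otimes> x) \<otimes> y" using a xy by (simp add: m_assoc)
  also have "\<dots> = x \<otimes> (a \<otimes> y)" using eng.IH(1) a xy by (simp add: m_assoc)
  also have "\<dots> = (x \<otimes> y) \<otimes> a" using eng.IH(2) a xy by (simp add: m_assoc)
  finally show ?case .
qed (use a comm in auto)

lemma (in group) generate_commute:
  assumes H: "H \<subseteq> carrier G" and comm: "\<And>x y. x \<in> H \<Longrightarrow> y \<in> H \<Longrightarrow> x \<otimes> y = y \<otimes> x"
  shows "\<forall>a \<in> generate G H. \<forall>b \<in> generate G H. a \<otimes> b = b \<otimes> a"
proof (intro ballI)
  fix a b assume a: "a \<in> generate G H" and b: "b \<in> generate G H"
  have a_carrier: "a \<in> carrier G" using generate_in_carrier[OF H] a by blast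
  have "h \<otimes> a = a \<otimes> h" if "h \<in> H" for h
    using commute_with_generate[OF H subsetD[OF H that] _ a] comm that by blast
  then show "a \<otimes> b = b \<otimes> a"
    by (intro commute_with_generate[OF H a_carrier _ b]) simp
qed

lemma BijGroup_generate_restrict_commute:
  assumes bij: "\<And>g. g \<in> gs \<Longrightarrow> bij_betw g X X"
    and comm: "\<And>g h z. g \<in> gs \<Longrightarrow> h \<in> gs \<Longrightarrow> z \<in> X \<Longrightarrow> g (h z) = h (g z)"
  shows "\<forall>a \<in> generate (BijGroup X) ((\<lambda>g. restrict g X) ` gs).
         \<forall>b \<in> generate (BijGroup X) ((\<lambda>g. restrict g X) ` gs).
           a \<otimes>\<^bsub>BijGroup X\<^esub> b = b \<otimes>\<^bsub>BijGroup X\<^esub> a"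
proof (rule group.generate_commute[OF group_BijGroup])
  show gens: "(\<lambda>g. restrict g X) ` gs \<subseteq> carrier (BijGroup X)"
    using bij by (auto simp: BijGroup_def Bij_def)
  have mult: "restrict g X \<otimes>\<^bsub>BijGroup X\<^esub> restrict h X = (\<lambda>z\<in>X. g (h z))" if "g \<in> gs" "h \<in> gs" for g h
    using gens that bij_betw_imp_funcset[OF bij[OF \<open>h \<in> gs\<close>]]
    by (auto simp: BijGroup_def compose_def fun_eq_iff)
  show "x \<otimes>\<^bsub>BijGroup X\<^esub> y = y \<otimes>\<^bsub>BijGroup X\<^esub> x"
    if "x \<in> (\<lambda>g. restrict g X) ` gs" "y \<in> (\<lambda>g. restrict g X) ` gs" for x y
    using that mult comm by (auto intro!: restrict_ext)
qed

theorem corollary3p6: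
  fixes gs :: "(complex \<Rightarrow> complex) set"
  assumes "finite gs"
    and "\<And>g. g \<in> gs \<Longrightarrow> diff2_plus g"
    and "\<And>g. g \<in> gs \<Longrightarrow> fully_supported g"
    and "\<And>g. g \<in> gs \<Longrightarrow> (\<exists>z \<in> S1. g z = z)"
    and "comm_graph_connected gs"
  shows "\<forall>a \<in> generate (BijGroup S1) ((\<lambda>g. restrict g S1) ` gs).
         \<forall>b \<in> generate (BijGroup S1) ((\<lambda>g. restrict g S1) ` gs).
           a \<otimes>\<^bsub>BijGroup S1\<^esub> b = b \<otimes>\<^bsub>BijGroup S1\<^esub> a"
proof -
  have "\<forall>g\<in>gs. \<exists>F. admissible_lift F \<and> is_lift F g"
    using exists_admissible_lift assms(2-4) by metis
  then obtain L where L: "\<And>g. g \<in> gs \<Longrightarrow> admissible_lift (L g) \<and> is_lift (L g) g"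
    by metis
  show ?thesis
  proof (rule BijGroup_generate_restrict_commute)
    show "bij_betw g S1 S1" if "g \<in> gs" for g
      using lift_bij_betw_S1 L[OF that] by blast
    show "g (h z) = h (g z)" if "g \<in> gs" "h \<in> gs" "z \<in> S1" for g h z
      using commute_on_S1_if_lifts_commute[of "L g" g "L h" h]
        lifts_commute_along_comm_graph[OF assms(5) L] L that unfolding commute_on_S1_def by blast
  qed
qed

end
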